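(* Let $n\ge 3$ and $w(A,B)\in\mathbb F_2=\langle A,B\rangle$. For every $1\le i\le n-2$, $$\Big[Q_n^i,\big[M_n^{i+1},P_n^{i+2}\big]\Big]\le\operatorname{Ker}(\Theta_n^w),$$ where $Q_n^i=\langle t_{i,i+1},\,e_{i,i+1,i+2}\rangle$, $M_n^{i+1}=\langle t_{i+1,i+2},\,d_{i,i+1,i+2}\rangle$, $P_n^{i+2}=\langle t_{i,i+2}\rangle$ are subgroups of $FVB_n$, and for subgroups $H,K$, $[H,K]$ denotes the subgroup generated by all commutators $[h,k]=hkh^{-1}k^{-1}$, $h\in H$, $k\in K$.
   Context: For $n\ge 2$, the flat virtual braid group $FVB_n$ is the group with generators $\sigma_1,\dots,\sigma_{n-1},\rho_1,\dots,\rho_{n-1}$ and defining relations: $\sigma_i^2=1$, $\rho_i^2=1$ for $1\le i\le n-1$; $\sigma_i\sigma_{i+1}\sigma_i=\sigma_{i+1}\sigma_i\sigma_{i+1}$, $\rho_i\rho_{i+1}\rho_i=\rho_{i+1}\rho_i\rho_{i+1}$ and $\rho_i\rho_{i+1}\sigma_i=\sigma_{i+1}\rho_i\rho_{i+1}$ for $1\le i\le n-2$; $\sigma_i\sigma_j=\sigma_j\sigma_i$, $\rho_i\rho_j=\rho_j\rho_i$ and $\rho_i\sigma_j=\sigma_j\rho_i$ for $|i-j|\ge 2$. $\mathbb F_{2n}$ is the free group on $x_1,\dots,x_n,y_1,\dots,y_n$; automorphisms compose left to right, $(\varphi\psi)(f)=\psi(\varphi(f))$, so that $\Theta(\beta\gamma)(f)=\Theta(\gamma)(\Theta(\beta)(f))$;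 generators not mentioned are fixed. For $w(A,B)\in\mathbb F_2$, $\Theta_n^w\colon FVB_n\to\mathrm{Aut}(\mathbb F_{2n})$ is the homomorphism given by $\Theta_n^w(\sigma_i): x_i\mapsto x_{i+1}w(y_i,y_{i+1}),\ x_{i+1}\mapsto x_i w(y_i,y_{i+1})^{-1}$ and $\Theta_n^w(\rho_i): x_i\mapsto x_{i+1},\ x_{i+1}\mapsto x_i,\ y_i\mapsto y_{i+1},\ y_{i+1}\mapsto y_i$. In $FVB_n$ define $\lambda_{i,i+1}=\rho_i\sigma_i$ for $1\le i\le n-1$ and $\lambda_{i,j}=\rho_{j-1}\rho_{j-2}\cdots\rho_{i+1}\,\lambda_{i,i+1}\,\rho_{i+1}\cdots\rho_{j-2}\rho_{j-1}$ for $j-i\ge 2$. Define $t_{i,j}=\lambda_{i,j}^2$ ($1\le i<j\le n$), $d_{i,j,k}=\lambda_{j,k}^{-1}\lambda_{i,j}^{-1}\lambda_{j,k}\lambda_{i,k}$ and $e_{i,j,k}=\lambda_{j,k}^{-1}\lambda_{i,j}^{-1}\lambda_{i,k}\lambda_{i,j}$ ($1\le i<j<k\le n$). *)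

theory Defs
  imports "HOL-Algebra.Algebra"
begin

text \<open>A word over an alphabet 'a is a list of signed letters; (True, x) is x, (False, x) is x^-1.\<close>
type_synonym 'a fword = "(bool \<times> 'a) list"

fun fg_push :: "bool \<times> 'a \<Rightarrow> 'a fword \<Rightarrow> 'a fword" where
  "fg_push a [] = [a]"
| "fg_push a (b # bs) = (if fst a \<noteq> fst b \<and> snd a = snd b then bs else a # b # bs)"

definition fg_reduce :: "'a fword \<Rightarrow> 'a fword" where
  "fg_reduce u = foldr fg_push u []"

definition fg_inv :: "'a fword \<Rightarrow> 'a fword" where
  "fg_inv u = rev (map (\<lambda>(b, x). (\<not> b, x)) u)"

definition fg_subst :: "('a \<Rightarrow> 'b fword) \<Rightarrow> 'a fword \<Rightarrow> 'b fword" where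
  "fg_subst phi u = fg_reduce (concat (map (\<lambda>(b, x). if b then phi x else fg_inv (phi x)) u))"

text \<open>Generators of F_2 = <A,B> and of F_2n = <x_1..x_n, y_1..y_n>.\<close>
datatype ab = A | B
datatype fletter = FX nat | FY nat

fun fl_idx :: "fletter \<Rightarrow> nat" where
  "fl_idx (FX k) = k" | "fl_idx (FY k) = k"

datatype fvb_gen = Sig nat | Rho nat

fun gen_idx :: "fvb_gen \<Rightarrow> nat" where
  "gen_idx (Sig k) = k" | "gen_idx (Rho k) = k"

definition fvb_words :: "nat \<Rightarrow> fvb_gen list set" where
  "fvb_words n = {u. \<forall>g \<in> set u. 1 \<le> gen_idx g \<and> gen_idx g \<le> n - 1}"

definition fvb_rels :: "nat \<Rightarrow> (fvb_gen list \<times> fvb_gen list) set" where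
  "fvb_rels n =
     {([Sig i, Sig i], []) | i. 1 \<le> i \<and> i \<le> n - 1}
   \<union> {([Rho i, Rho i], []) | i. 1 \<le> i \<and> i \<le> n - 1}
   \<union> {([Sig i, Sig (i+1), Sig i], [Sig (i+1), Sig i, Sig (i+1)]) | i. 1 \<le> i \<and> i \<le> n - 2}
   \<union> {([Rho i, Rho (i+1), Rho i], [Rho (i+1), Rho i, Rho (i+1)]) | i. 1 \<le> i \<and> i \<le> n - 2}
   \<union> {([Rho i, Rho (i+1), Sig i], [Sig (i+1), Rho i, Rho (i+1)]) | i. 1 \<le> i \<and> i \<le> n - 2}
   \<union> {([Sig i, Sig j], [Sig j, Sig i]) | i j. 1 \<le> i \<and> i \<le> n - 1 \<and> 1 \<le> j \<and> j \<le> n - 1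
         \<and> (i + 2 \<le> j \<or> j + 2 \<le> i)}
   \<union> {([Rho i, Rho j], [Rho j, Rho i]) | i j. 1 \<le> i \<and> i \<le> n - 1 \<and> 1 \<le> j \<and> j \<le> n - 1
         \<and> (i + 2 \<le> j \<or> j + 2 \<le> i)}
   \<union> {([Rho i, Sig j], [Sig j, Rho i]) | i j. 1 \<le> i \<and> i \<le> n - 1 \<and> 1 \<le> j \<and> j \<le> n - 1
         \<and> (i + 2 \<le> j \<or> j + 2 \<le> i)}"

text \<open>The congruence on words generated by the relations.  Since every generator is an
  involution, FVB_n is the quotient of the free monoid on the generators by this congruence.\<close>
inductive fvb_eq :: "nat \<Rightarrow> fvb_gen list \<Rightarrow> fvb_gen list \<Rightarrow> bool" for n where
  rel: "\<lbrakk>(l, r) \<in> fvb_rels n; a \<in> fvb_words n; b \<in> fvb_words n\<rbrakk>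
          \<Longrightarrow> fvb_eq n (a @ l @ b) (a @ r @ b)"
| refl: "u \<in> fvb_words n \<Longrightarrow> fvb_eq n u u"
| sym: "fvb_eq n u v \<Longrightarrow> fvb_eq n v u"
| trans: "\<lbrakk>fvb_eq n u v; fvb_eq n v w\<rbrakk> \<Longrightarrow> fvb_eq n u w"

definition fvb_class :: "nat \<Rightarrow> fvb_gen list \<Rightarrow> fvb_gen list set" where
  "fvb_class n u = {v. fvb_eq n u v}"

definition FVB :: "nat \<Rightarrow> fvb_gen list set monoid" where
  "FVB n = \<lparr> carrier = fvb_class n ` fvb_words n,
             monoid.mult = (\<lambda>C D. {v. \<exists>u1 \<in> C. \<exists>u2 \<in> D. fvb_eq n (u1 @ u2) v}),
             one = fvb_class n [] \<rparr>"

definition fvb_sigma :: "nat \<Rightarrow> nat \<Rightarrow> fvb_gen list set" where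
  "fvb_sigma n i = fvb_class n [Sig i]"

definition fvb_rho :: "nat \<Rightarrow> nat \<Rightarrow> fvb_gen list set" where
  "fvb_rho n i = fvb_class n [Rho i]"

text \<open>lambda_{i,i+1} = rho_i sigma_i and, for j - i >= 2,
  lambda_{i,j} = rho_{j-1} ... rho_{i+1} lambda_{i,i+1} rho_{i+1} ... rho_{j-1},
  i.e. lambda_{i,j} = rho_{j-1} lambda_{i,j-1} rho_{j-1}.  (Only used for i < j.)\<close>
fun fvb_lambda :: "nat \<Rightarrow> nat \<Rightarrow> nat \<Rightarrow> fvb_gen list set" where
  "fvb_lambda n i 0 = \<one>\<^bsub>FVB n\<^esub>"
| "fvb_lambda n i (Suc j) =
     (if Suc j \<le> Suc i then fvb_rho n i \<otimes>\<^bsub>FVB n\<^esub> fvb_sigma n i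
      else fvb_rho n j \<otimes>\<^bsub>FVB n\<^esub> fvb_lambda n i j \<otimes>\<^bsub>FVB n\<^esub> fvb_rho n j)"

definition fvb_t :: "nat \<Rightarrow> nat \<Rightarrow> nat \<Rightarrow> fvb_gen list set" where
  "fvb_t n i j = fvb_lambda n i j \<otimes>\<^bsub>FVB n\<^esub> fvb_lambda n i j"

definition fvb_d :: "nat \<Rightarrow> nat \<Rightarrow> nat \<Rightarrow> nat \<Rightarrow> fvb_gen list set" where
  "fvb_d n i j k = inv\<^bsub>FVB n\<^esub> (fvb_lambda n j k) \<otimes>\<^bsub>FVB n\<^esub> inv\<^bsub>FVB n\<^esub> (fvb_lambda n i j)
      \<otimes>\<^bsub>FVB n\<^esub> fvb_lambda n j k \<otimes>\<^bsub>FVB n\<^esub> fvb_lambda n i k"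

definition fvb_e :: "nat \<Rightarrow> nat \<Rightarrow> nat \<Rightarrow> nat \<Rightarrow> fvb_gen list set" where
  "fvb_e n i j k = inv\<^bsub>FVB n\<^esub> (fvb_lambda n j k) \<otimes>\<^bsub>FVB n\<^esub> inv\<^bsub>FVB n\<^esub> (fvb_lambda n i j)
      \<otimes>\<^bsub>FVB n\<^esub> fvb_lambda n i k \<otimes>\<^bsub>FVB n\<^esub> fvb_lambda n i j"

definition w_at :: "ab fword \<Rightarrow> nat \<Rightarrow> fletter fword" where
  "w_at w i = fg_subst (\<lambda>c. case c of A \<Rightarrow> [(True, FY i)] | B \<Rightarrow> [(True, FY (i+1))]) w"

fun theta_gen :: "ab fword \<Rightarrow> fvb_gen \<Rightarrow> fletter \<Rightarrow> fletter fword" where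
  "theta_gen w (Sig i) l =
     (if l = FX i then (True, FX (i+1)) # w_at w i
      else if l = FX (i+1) then (True, FX i) # fg_inv (w_at w i)
      else [(True, l)])"
| "theta_gen w (Rho i) l =
     (if l = FX i then [(True, FX (i+1))]
      else if l = FX (i+1) then [(True, FX i)]
      else if l = FY i then [(True, FY (i+1))]
      else if l = FY (i+1) then [(True, FY i)]
      else [(True, l)])"

text \<open>Theta on words, with the convention Theta(beta gamma)(f) = Theta(gamma)(Theta(beta)(f)).
  An automorphism is represented by the (reduced) images of the free generators.\<close>
fun theta_word :: "ab fword \<Rightarrow> fvb_gen list \<Rightarrow> fletter \<Rightarrow> fletter fword" where
  "theta_word w [] l = [(True, l)]"
| "theta_word w (g # u) l = fg_subst (theta_word w u) (theta_gen w g l)"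

definition Theta :: "ab fword \<Rightarrow> fvb_gen list set \<Rightarrow> fletter \<Rightarrow> fletter fword" where
  "Theta w C = theta_word w (SOME u. u \<in> C)"

definition Theta_ker :: "nat \<Rightarrow> ab fword \<Rightarrow> fvb_gen list set set" where
  "Theta_ker n w = {C \<in> carrier (FVB n). \<forall>l. 1 \<le> fl_idx l \<and> fl_idx l \<le> n \<longrightarrow> Theta w C l = [(True, l)]}"

definition comm_sub :: "('a, 'b) monoid_scheme \<Rightarrow> 'a set \<Rightarrow> 'a set \<Rightarrow> 'a set" where
  "comm_sub G H K = generate G {h \<otimes>\<^bsub>G\<^esub> k \<otimes>\<^bsub>G\<^esub> inv\<^bsub>G\<^esub> h \<otimes>\<^bsub>G\<^esub> inv\<^bsub>G\<^esub> k | h k. h \<in> H \<and> k \<in> K}"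

end

theory Submission
  imports Defs "HOL-Combinatorics.Transposition"
begin

text \<open>Every automorphism \<open>\<Theta>(\<beta>)\<close> has the shape \<open>x\<^sub>k \<mapsto> x\<^sub>\<pi>\<^sub>k u\<^sub>k\<close>,
  \<open>y\<^sub>k \<mapsto> y\<^sub>\<tau>\<^sub>k\<close> with each \<open>u\<^sub>k\<close> a word in the \<open>y\<close>'s. Call it supported in \<open>S\<close> if \<open>\<pi>\<close>
  and \<open>\<tau>\<close> are trivial and \<open>u\<^sub>k = 1\<close> for \<open>k \<notin> S\<close>. Such automorphisms compose by multiplying
  the tails \<open>u\<^sub>k\<close> coordinatewise, so the elements of \<open>FVB\<^sub>n\<close> whose image is supported in \<open>S\<close>
  form a subgroup, and a commutator of an element supported in \<open>S\<close> with one supported in \<open>T\<close>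
  is supported in \<open>S \<inter> T\<close>. The generators of \<open>Q\<close>, \<open>M\<close>, \<open>P\<close> are supported in
  \<open>{i, i+1}\<close>, \<open>{i+1, i+2}\<close>, \<open>{i, i+2}\<close>, which have empty common intersection, and an
  element supported in \<open>\<emptyset>\<close> lies in the kernel.\<close>

section \<open>Reduced words\<close>

fun fg_reduced :: "'a fword \<Rightarrow> bool" where
  "fg_reduced (a # b # r) \<longleftrightarrow> b \<noteq> apfst Not a \<and> fg_reduced (b # r)"
| "fg_reduced _ \<longleftrightarrow> True"

lemma apfst_Not_Not [simp]: "apfst Not (apfst Not a) = a"
  by (cases a) simp

lemma fg_push_Cons: "fg_push a (b # bs) = (if b = apfst Not a then bs else a # b # bs)"
  by (cases a; cases b) auto

declare fg_push.simps(2) [simp del]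

lemma fg_reduced_ConsD: "fg_reduced (a # r) \<Longrightarrow> fg_reduced r"
  by (cases r) auto

lemma fg_reduced_push: "fg_reduced v \<Longrightarrow> fg_reduced (fg_push a v)"
  by (cases v) (auto simp: fg_push_Cons dest: fg_reduced_ConsD)

lemma fg_reduced_reduce [simp]: "fg_reduced (fg_reduce u)"
  unfolding fg_reduce_def by (induction u) (auto intro: fg_reduced_push)

lemma fg_push_cancel: "fg_reduced v \<Longrightarrow> fg_push (apfst Not a) (fg_push a v) = v"
  by (cases v rule: fg_reduced.cases) (auto simp: fg_push_Cons)

lemma fg_reduce_reduced [simp]: "fg_reduced u \<Longrightarrow> fg_reduce u = u"
  by (induction u rule: fg_reduced.induct) (auto simp: fg_reduce_def fg_push_Cons)

lemma fg_inv_eq: "fg_inv u = rev (map (apfst Not) u)"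
  by (simp add: fg_inv_def apfst_def map_prod_def)

lemma fg_inv_Nil [simp]: "fg_inv [] = []"
  and fg_inv_Cons: "fg_inv (a # u) = fg_inv u @ [apfst Not a]"
  and fg_inv_append [simp]: "fg_inv (u @ v) = fg_inv v @ fg_inv u"
  and fg_inv_inv [simp]: "fg_inv (fg_inv u) = u"
  and set_fg_inv: "set (fg_inv u) = apfst Not ` set u"
  by (simp_all add: fg_inv_eq rev_map[symmetric] map_idI)

lemma fg_reduce_append: "fg_reduce (u @ v) = foldr fg_push u (fg_reduce v)"
  by (simp add: fg_reduce_def)

lemma foldr_fg_push_reduced [simp]: "fg_reduced v \<Longrightarrow> fg_reduced (foldr fg_push u v)"
  by (induction u) (auto intro: fg_reduced_push)

lemma foldr_fg_push_cancel: "fg_reduced v \<Longrightarrow> foldr fg_push (u @ fg_inv u) v = v"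
  by (induction u arbitrary: v)
    (simp_all add: fg_inv_Cons fg_reduced_push, metis apfst_Not_Not fg_push_cancel)

lemma foldr_fg_push_push:
  assumes "fg_reduced r" and "fg_reduced z"
  shows "foldr fg_push (fg_push a r) z = fg_push a (foldr fg_push r z)"
proof (cases r)
  case (Cons b r')
  show ?thesis
  proof (cases "b = apfst Not a")
    case True
    then show ?thesis using Cons fg_push_cancel[of "foldr fg_push r' z" b] assms
      by (simp add: fg_push_Cons fg_reduced_ConsD)
  qed (simp add: Cons fg_push_Cons)
qed simp

lemma foldr_fg_push_reduce: "fg_reduced z \<Longrightarrow> foldr fg_push (fg_reduce u) z = foldr fg_push u z"
  by (induction u) (simp_all add: fg_reduce_def foldr_fg_push_push)

lemma fg_reduce_reduce_left [simp]: "fg_reduce (fg_reduce u @ v) = fg_reduce (u @ v)"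
  and fg_reduce_reduce_right [simp]: "fg_reduce (u @ fg_reduce v) = fg_reduce (u @ v)"
  by (simp_all add: fg_reduce_append foldr_fg_push_reduce)

lemma fg_reduce_cancel [simp]: "fg_reduce (u @ fg_inv u @ v) = fg_reduce v"
  and fg_reduce_cancel' [simp]: "fg_reduce (fg_inv u @ u @ v) = fg_reduce v"
  using foldr_fg_push_cancel[of "fg_reduce v" u] foldr_fg_push_cancel[of "fg_reduce v" "fg_inv u"]
  by (simp_all add: fg_reduce_append[symmetric])

lemma fg_reduce_Nil [simp]: "fg_reduce [] = []"
  by (simp add: fg_reduce_def)

lemma fg_reduced_snoc2: "fg_reduced (u @ [a, b]) \<longleftrightarrow> fg_reduced (u @ [a]) \<and> b \<noteq> apfst Not a"
  by (induction u rule: fg_reduced.induct) auto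

lemma fg_reduced_inv [simp]: "fg_reduced (fg_inv u) \<longleftrightarrow> fg_reduced u"
proof -
  have "fg_reduced u \<Longrightarrow> fg_reduced (fg_inv u)" for u :: "'a fword"
    by (induction u rule: fg_reduced.induct) (auto simp: fg_inv_Cons fg_reduced_snoc2)
  then show ?thesis by (metis fg_inv_inv)
qed

lemma fg_reduce_inv: "fg_reduce (fg_inv u) = fg_inv (fg_reduce u)"
proof -
  let ?r = "fg_reduce u"
  have "fg_reduce (u @ fg_inv ?r) = []"
    using fg_reduce_reduce_left[of u "fg_inv ?r"] fg_reduce_cancel[of ?r "[]"] by simp
  then have "fg_reduce (fg_inv u) = fg_reduce (fg_inv u @ fg_reduce (u @ fg_inv ?r))"
    by simp
  also have "\<dots> = fg_inv ?r"
    by simp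
  finally show ?thesis .
qed

lemma set_fg_reduce: "set (fg_reduce u) \<subseteq> set u"
proof -
  have "set (fg_push a v) \<subseteq> insert a (set v)" for a and v :: "'a fword"
    by (cases v) (auto simp: fg_push_Cons)
  then show ?thesis
    unfolding fg_reduce_def by (induction u) fastforce+
qed

definition fg_mult :: "'a fword \<Rightarrow> 'a fword \<Rightarrow> 'a fword" where
  "fg_mult u v = fg_reduce (u @ v)"

lemma fg_reduced_mult [simp]: "fg_reduced (fg_mult u v)"
  and fg_mult_Nil_left [simp]: "fg_mult [] v = fg_reduce v"
  and fg_mult_Nil_right [simp]: "fg_mult u [] = fg_reduce u"
  and fg_mult_reduce_left [simp]: "fg_mult (fg_reduce u) v = fg_mult u v"
  and fg_mult_reduce_right [simp]: "fg_mult u (fg_reduce v) = fg_mult u v"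
  and fg_inv_mult [simp]: "fg_inv (fg_mult u v) = fg_mult (fg_inv v) (fg_inv u)"
  by (simp_all add: fg_mult_def fg_reduce_inv[symmetric])

lemma fg_mult_assoc [simp]: "fg_mult (fg_mult u v) z = fg_mult u (fg_mult v z)"
proof -
  have "fg_reduce (fg_reduce (u @ v) @ z) = fg_reduce (u @ fg_reduce (v @ z))"
    by simp
  then show ?thesis by (simp only: fg_mult_def)
qed

lemma fg_mult_inv_right [simp]: "fg_mult u (fg_inv u) = []"
  and fg_mult_inv_left [simp]: "fg_mult (fg_inv u) u = []"
  and fg_mult_inv_cancel_left [simp]: "fg_mult u (fg_mult (fg_inv u) v) = fg_reduce v"
  and fg_mult_inv_cancel_left' [simp]: "fg_mult (fg_inv u) (fg_mult u v) = fg_reduce v"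
  using fg_reduce_cancel[of u "[]"] fg_reduce_cancel'[of u "[]"] by (simp_all add: fg_mult_def)

definition fg_subst_letter :: "('a \<Rightarrow> 'b fword) \<Rightarrow> bool \<times> 'a \<Rightarrow> 'b fword" where
  "fg_subst_letter f a = (if fst a then f (snd a) else fg_inv (f (snd a)))"

lemma fg_subst_eq: "fg_subst f u = fg_reduce (concat (map (fg_subst_letter f) u))"
  unfolding fg_subst_def fg_subst_letter_def by (simp add: case_prod_beta')

lemma fg_subst_Nil [simp]: "fg_subst f [] = []"
  and fg_subst_Cons: "fg_subst f (a # u) = fg_mult (fg_subst_letter f a) (fg_subst f u)"
  and fg_subst_append: "fg_subst f (u @ v) = fg_mult (fg_subst f u) (fg_subst f v)"
  and fg_subst_singleton [simp]: "fg_subst f [(True, x)] = fg_reduce (f x)"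
  and fg_reduced_subst [simp]: "fg_reduced (fg_subst f u)"
  by (simp_all add: fg_subst_eq fg_mult_def fg_subst_letter_def)

lemma fg_subst_inv: "fg_subst f (fg_inv u) = fg_inv (fg_subst f u)"
proof -
  have "fg_subst_letter f (apfst Not a) = fg_inv (fg_subst_letter f a)" for a
    by (simp add: fg_subst_letter_def)
  then have "concat (map (fg_subst_letter f) (fg_inv u))
      = fg_inv (concat (map (fg_subst_letter f) u))"
    by (induction u) (simp_all add: fg_inv_Cons)
  then show ?thesis by (simp add: fg_subst_eq fg_reduce_inv)
qed

lemma fg_subst_push: "fg_subst f (fg_push a v) = fg_subst f (a # v)"
proof (cases v)
  case (Cons b v')
  show ?thesis
  proof (cases "b = apfst Not a")
    case True
    then have "fg_subst_letter f b = fg_inv (fg_subst_letter f a)"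
      by (simp add: fg_subst_letter_def)
    then show ?thesis using Cons True by (simp add: fg_push_Cons fg_subst_Cons fg_mult_def)
  qed (simp add: Cons fg_push_Cons)
qed simp

lemma fg_subst_reduce [simp]: "fg_subst f (fg_reduce u) = fg_subst f u"
  by (induction u) (simp_all add: fg_reduce_def fg_subst_push fg_subst_Cons)

lemma fg_subst_subst: "fg_subst f (fg_subst g u) = fg_subst (\<lambda>x. fg_subst f (g x)) u"
proof -
  have "fg_subst f (concat (map (fg_subst_letter g) u)) = fg_subst (\<lambda>x. fg_subst f (g x)) u"
    by (induction u) (simp_all add: fg_subst_append fg_subst_Cons fg_subst_letter_def fg_subst_inv)
  then show ?thesis by (simp only: fg_subst_eq[of g u] fg_subst_reduce)
qed

lemma fg_subst_cong:
  "(\<And>a. a \<in> set u \<Longrightarrow> f (snd a) = g (snd a)) \<Longrightarrow> fg_subst f u = fg_subst g u"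
  unfolding fg_subst_eq fg_subst_letter_def
  by (intro arg_cong[where f = "\<lambda>xs. fg_reduce (concat xs)"] map_cong) auto

definition y_word :: "fletter fword \<Rightarrow> bool" where
  "y_word u \<longleftrightarrow> snd ` set u \<subseteq> range FY"

lemma y_word_Nil [simp]: "y_word []"
  and y_word_append [simp]: "y_word (u @ v) \<longleftrightarrow> y_word u \<and> y_word v"
  and y_word_inv [simp]: "y_word (fg_inv u) \<longleftrightarrow> y_word u"
  by (auto simp: y_word_def set_fg_inv image_image)

lemma y_word_reduce [simp]: "y_word u \<Longrightarrow> y_word (fg_reduce u)"
  unfolding y_word_def using set_fg_reduce by (meson image_mono order_trans)

lemma y_word_mult [simp]: "y_word u \<Longrightarrow> y_word v \<Longrightarrow> y_word (fg_mult u v)"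
  by (simp add: fg_mult_def)

lemma y_word_subst: "(\<And>a. a \<in> set u \<Longrightarrow> y_word (f (snd a))) \<Longrightarrow> y_word (fg_subst f u)"
proof -
  assume "\<And>a. a \<in> set u \<Longrightarrow> y_word (f (snd a))"
  then have "y_word (concat (map (fg_subst_letter f) u))"
    by (induction u) (auto simp: fg_subst_letter_def)
  then show ?thesis by (simp add: fg_subst_eq)
qed

fun rename_y_letter :: "(nat \<Rightarrow> nat) \<Rightarrow> fletter \<Rightarrow> fletter fword" where
  "rename_y_letter \<beta> (FX k) = [(True, FX k)]"
| "rename_y_letter \<beta> (FY k) = [(True, FY (\<beta> k))]"

definition rename_y :: "(nat \<Rightarrow> nat) \<Rightarrow> fletter fword \<Rightarrow> fletter fword" where
  "rename_y \<beta> = fg_subst (rename_y_letter \<beta>)"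

definition w_y :: "ab fword \<Rightarrow> nat \<Rightarrow> nat \<Rightarrow> fletter fword" where
  "w_y w p q = fg_subst (\<lambda>c. case c of A \<Rightarrow> [(True, FY p)] | B \<Rightarrow> [(True, FY q)]) w"

lemma w_at_eq_w_y: "w_at w i = w_y w i (i + 1)"
  unfolding w_at_def w_y_def ..

lemma y_word_w_y [simp]: "y_word (w_y w p q)"
  unfolding w_y_def by (rule y_word_subst) (auto simp: y_word_def split: ab.split)

lemma fg_reduced_w_y [simp]: "fg_reduced (w_y w p q)"
  by (simp add: w_y_def)

lemma y_word_rename_y [simp]: "y_word u \<Longrightarrow> y_word (rename_y \<beta> u)"
  unfolding rename_y_def by (rule y_word_subst) (auto simp: y_word_def)

lemma fg_reduced_rename_y [simp]: "fg_reduced (rename_y \<beta> u)"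
  by (simp add: rename_y_def)

lemma rename_y_Nil [simp]: "rename_y \<beta> [] = []"
  and rename_y_mult [simp]: "rename_y \<beta> (fg_mult u v) = fg_mult (rename_y \<beta> u) (rename_y \<beta> v)"
  and rename_y_inv [simp]: "rename_y \<beta> (fg_inv u) = fg_inv (rename_y \<beta> u)"
  and rename_y_reduce [simp]: "rename_y \<beta> (fg_reduce u) = rename_y \<beta> u"
  by (simp_all add: rename_y_def fg_mult_def fg_subst_append fg_subst_inv)

lemma rename_y_rename_y [simp]: "rename_y \<beta> (rename_y \<gamma> u) = rename_y (\<beta> \<circ> \<gamma>) u"
proof -
  have "fg_subst (rename_y_letter \<beta>) (rename_y_letter \<gamma> l) = rename_y_letter (\<beta> \<circ> \<gamma>) l" for l
    by (cases l) simp_all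
  then show ?thesis
    unfolding rename_y_def fg_subst_subst by simp
qed

lemma rename_y_w_y [simp]: "rename_y \<beta> (w_y w p q) = w_y w (\<beta> p) (\<beta> q)"
proof -
  have "fg_subst (rename_y_letter \<beta>) (case c of A \<Rightarrow> [(True, FY p)] | B \<Rightarrow> [(True, FY q)])
      = (case c of A \<Rightarrow> [(True, FY (\<beta> p))] | B \<Rightarrow> [(True, FY (\<beta> q))])" for c
    by (cases c) simp_all
  then show ?thesis
    unfolding rename_y_def w_y_def fg_subst_subst by simp
qed

lemma rename_y_id [simp]: "rename_y id u = fg_reduce u"
proof -
  have "rename_y_letter id l = [(True, l)]" for l
    by (cases l) simp_all
  then have "concat (map (fg_subst_letter (rename_y_letter id)) u) = u"
    by (induction u) (auto simp: fg_subst_letter_def fg_inv_eq)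
  then show ?thesis by (simp add: rename_y_def fg_subst_eq)
qed

section \<open>Automorphisms permuting the generators up to \<open>y\<close>-tails\<close>

datatype xy_aut =
  XYAut (x_idx: "nat \<Rightarrow> nat") (y_idx: "nat \<Rightarrow> nat") (x_tail: "nat \<Rightarrow> fletter fword")

fun xy_images :: "xy_aut \<Rightarrow> fletter \<Rightarrow> fletter fword" where
  "xy_images t (FX k) = (True, FX (x_idx t k)) # x_tail t k"
| "xy_images t (FY k) = [(True, FY (y_idx t k))]"

text \<open>\<open>xy_comp t t'\<close> is \<open>t\<close> followed by \<open>t'\<close>, the composition order used for \<open>\<Theta>\<close>.\<close>

definition xy_comp :: "xy_aut \<Rightarrow> xy_aut \<Rightarrow> xy_aut" where
  "xy_comp t t' = XYAut (x_idx t' \<circ> x_idx t) (y_idx t' \<circ> y_idx t)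
     (\<lambda>k. fg_mult (x_tail t' (x_idx t k)) (rename_y (y_idx t') (x_tail t k)))"

definition xy_id :: xy_aut where
  "xy_id = XYAut id id (\<lambda>_. [])"

definition xy_wf :: "xy_aut \<Rightarrow> bool" where
  "xy_wf t \<longleftrightarrow> (\<forall>k. fg_reduced (x_tail t k) \<and> y_word (x_tail t k))"

lemma x_idx_comp [simp]: "x_idx (xy_comp t t') k = x_idx t' (x_idx t k)"
  and y_idx_comp [simp]: "y_idx (xy_comp t t') k = y_idx t' (y_idx t k)"
  and x_tail_comp [simp]:
    "x_tail (xy_comp t t') k = fg_mult (x_tail t' (x_idx t k)) (rename_y (y_idx t') (x_tail t k))"
  and x_idx_id [simp]: "x_idx xy_id k = k"
  and y_idx_id [simp]: "y_idx xy_id k = k"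
  and x_tail_id [simp]: "x_tail xy_id k = []"
  by (simp_all add: xy_comp_def xy_id_def)

lemma xy_wf_comp [simp]: "xy_wf t \<Longrightarrow> xy_wf t' \<Longrightarrow> xy_wf (xy_comp t t')"
  and xy_wf_id [simp]: "xy_wf xy_id"
  by (simp_all add: xy_wf_def)

lemma xy_comp_assoc: "xy_comp (xy_comp t t') t'' = xy_comp t (xy_comp t' t'')"
  by (simp add: xy_comp_def o_def)

lemma xy_comp_id_left: "xy_wf t \<Longrightarrow> xy_comp xy_id t = t"
  and xy_comp_id_right: "xy_wf t \<Longrightarrow> xy_comp t xy_id = t"
  by (cases t; simp add: xy_comp_def xy_id_def xy_wf_def)+

lemma fg_subst_xy_images_y_word: "y_word u \<Longrightarrow> fg_subst (xy_images t) u = rename_y (y_idx t) u"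
  unfolding rename_y_def by (rule fg_subst_cong) (auto simp: y_word_def)

lemma fg_push_FX_y_word: "y_word u \<Longrightarrow> fg_push (True, FX m) u = (True, FX m) # u"
  by (cases u) (auto simp: y_word_def fg_push_Cons)

lemma xy_images_comp:
  assumes "xy_wf t" and "xy_wf t'"
  shows "fg_subst (xy_images t') (xy_images t l) = xy_images (xy_comp t t') l"
proof (cases l)
  case (FX k)
  have y: "y_word (x_tail t k)" "y_word (x_tail t' (x_idx t k))"
    and r: "fg_reduced (x_tail t' (x_idx t k))"
    using assms by (auto simp: xy_wf_def)
  have "fg_subst (xy_images t') (xy_images t l)
      = fg_push (True, FX (x_idx t' (x_idx t k))) (x_tail (xy_comp t t') k)"
    using FX y r
    by (simp add: fg_subst_Cons fg_subst_letter_def fg_subst_xy_images_y_word fg_mult_def fg_reduce_def)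
  then show ?thesis
    using FX y by (simp add: fg_push_FX_y_word)
qed simp

section \<open>Supported automorphisms\<close>

definition xy_supported :: "nat set \<Rightarrow> xy_aut \<Rightarrow> bool" where
  "xy_supported S t \<longleftrightarrow> x_idx t = id \<and> y_idx t = id \<and> (\<forall>k. k \<notin> S \<longrightarrow> x_tail t k = [])"

lemma xy_supported_id: "xy_supported S xy_id"
  by (simp add: xy_supported_def xy_id_def)

lemma xy_supported_comp:
  "xy_supported S t \<Longrightarrow> xy_supported S t' \<Longrightarrow> xy_supported S (xy_comp t t')"
  by (auto simp: xy_supported_def xy_comp_def)

lemma xy_supported_inverse:
  assumes t: "xy_supported S t" and wf: "xy_wf t'" and inverse: "xy_comp t t' = xy_id"
  shows "xy_supported S t'"
proof -
  have "x_idx (xy_comp t t') = x_idx xy_id" "y_idx (xy_comp t t') = y_idx xy_id"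
    using inverse by simp_all
  then have idx: "x_idx t' = id" "y_idx t' = id"
    using t by (simp_all add: xy_supported_def fun_eq_iff)
  have "x_tail t' k = []" if "k \<notin> S" for k
  proof -
    have "fg_mult (x_tail t' k) (x_tail t k) = []"
      using arg_cong[OF inverse, of "\<lambda>s. x_tail s k"] t idx by (simp add: xy_supported_def)
    then show ?thesis
      using t that wf by (simp add: xy_supported_def xy_wf_def)
  qed
  then show ?thesis using idx by (simp add: xy_supported_def)
qed

lemma xy_supported_commutator:
  assumes h: "xy_supported S h" and k: "xy_supported T k"
    and wf: "xy_wf h" "xy_wf h'" "xy_wf k" "xy_wf k'"
    and h': "xy_comp h h' = xy_id" and k': "xy_comp k k' = xy_id"
  shows "xy_supported (S \<inter> T) (xy_comp (xy_comp (xy_comp h k) h') k')"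
proof -
  have sh': "xy_supported S h'" and sk': "xy_supported T k'"
    using xy_supported_inverse h k wf h' k' by blast+
  have reduced: "fg_reduce (x_tail t j) = x_tail t j" if "xy_wf t" for t j
    using that by (simp add: xy_wf_def)
  have tail_inv: "fg_mult (x_tail h' j) (x_tail h j) = []"
    "fg_mult (x_tail k' j) (x_tail k j) = []" for j
    using arg_cong[OF h', of "\<lambda>t. x_tail t j"] arg_cong[OF k', of "\<lambda>t. x_tail t j"] h k sh' sk'
    by (simp_all add: xy_supported_def)
  have tail: "x_tail (xy_comp (xy_comp (xy_comp h k) h') k') j
      = fg_mult (x_tail k' j) (fg_mult (x_tail h' j) (fg_mult (x_tail k j) (x_tail h j)))" for j
    using h k sh' sk' by (simp add: xy_supported_def)
  have "x_tail (xy_comp (xy_comp (xy_comp h k) h') k') j = []" if "j \<notin> S \<inter> T" for j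
  proof (cases "j \<in> S")
    case False
    then have "x_tail h j = []" "x_tail h' j = []" using h sh' by (auto simp: xy_supported_def)
    then show ?thesis unfolding tail using tail_inv by simp
  next
    case True
    then have "x_tail k j = []" "x_tail k' j = []" using that k sk' by (auto simp: xy_supported_def)
    then show ?thesis unfolding tail using tail_inv by simp
  qed
  then show ?thesis using h k sh' sk' by (simp add: xy_supported_def fun_eq_iff)
qed

lemma fvb_words_Nil [simp]: "[] \<in> fvb_words n"
  and fvb_words_Cons [simp]:
    "g # u \<in> fvb_words n \<longleftrightarrow> 1 \<le> gen_idx g \<and> gen_idx g < n \<and> u \<in> fvb_words n"
  and fvb_words_append [simp]: "u @ v \<in> fvb_words n \<longleftrightarrow> u \<in> fvb_words n \<and> v \<in> fvb_words n"
  and fvb_words_rev [simp]: "rev u \<in> fvb_words n \<longleftrightarrow> u \<in> fvb_words n"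
  by (auto simp: fvb_words_def)

lemma fvb_eq_words: "fvb_eq n u v \<Longrightarrow> u \<in> fvb_words n \<and> v \<in> fvb_words n"
proof (induction rule: fvb_eq.induct)
  case (rel l r)
  then have "l \<in> fvb_words n \<and> r \<in> fvb_words n"
    unfolding fvb_rels_def by auto
  then show ?case using rel by simp
qed auto

lemma fvb_eq_append_right:
  "fvb_eq n u u' \<Longrightarrow> v \<in> fvb_words n \<Longrightarrow> fvb_eq n (u @ v) (u' @ v)"
proof (induction rule: fvb_eq.induct)
  case (rel l r a b)
  then show ?case using fvb_eq.rel[of l r n a "b @ v"] by simp
qed (auto intro: fvb_eq.intros)

lemma fvb_eq_append_left:
  "fvb_eq n u u' \<Longrightarrow> v \<in> fvb_words n \<Longrightarrow> fvb_eq n (v @ u) (v @ u')"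
proof (induction rule: fvb_eq.induct)
  case (rel l r a b)
  then show ?case using fvb_eq.rel[of l r n "v @ a" b] by simp
qed (auto intro: fvb_eq.intros)

lemma fvb_eq_append: "fvb_eq n u u' \<Longrightarrow> fvb_eq n v v' \<Longrightarrow> fvb_eq n (u @ v) (u' @ v')"
  by (meson fvb_eq_append_left fvb_eq_append_right fvb_eq_words fvb_eq.trans)

lemma fvb_eq_rev_cancel: "u \<in> fvb_words n \<Longrightarrow> fvb_eq n (rev u @ u) []"
proof (induction u)
  case (Cons g u)
  have "([g, g], []) \<in> fvb_rels n"
    using Cons.prems by (cases g) (auto simp: fvb_rels_def)
  then have "fvb_eq n (rev u @ [g, g] @ u) (rev u @ [] @ u)"
    by (rule fvb_eq.rel) (use Cons.prems in auto)
  then show ?case using Cons by (auto intro: fvb_eq.trans)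
qed (simp add: fvb_eq.refl)

lemma fvb_class_eqI: "fvb_eq n u v \<Longrightarrow> fvb_class n u = fvb_class n v"
  unfolding fvb_class_def by (blast intro: fvb_eq.sym fvb_eq.trans)

lemma carrier_FVB: "carrier (FVB n) = fvb_class n ` fvb_words n"
  and one_FVB: "\<one>\<^bsub>FVB n\<^esub> = fvb_class n []"
  by (simp_all add: FVB_def)

lemma mult_FVB_class:
  "u \<in> fvb_words n \<Longrightarrow> v \<in> fvb_words n
    \<Longrightarrow> fvb_class n u \<otimes>\<^bsub>FVB n\<^esub> fvb_class n v = fvb_class n (u @ v)"
  unfolding FVB_def fvb_class_def
  by (auto intro: fvb_eq.refl) (meson fvb_eq_append fvb_eq.sym fvb_eq.trans)

lemma group_FVB: "group (FVB n)"
proof (rule groupI)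
  fix x assume "x \<in> carrier (FVB n)"
  then obtain u where u: "u \<in> fvb_words n" "x = fvb_class n u"
    by (auto simp: carrier_FVB)
  then have "fvb_class n (rev u) \<otimes>\<^bsub>FVB n\<^esub> x = \<one>\<^bsub>FVB n\<^esub>"
    by (simp add: mult_FVB_class one_FVB fvb_class_eqI fvb_eq_rev_cancel)
  moreover have "fvb_class n (rev u) \<in> carrier (FVB n)"
    using u by (simp add: carrier_FVB)
  ultimately show "\<exists>y\<in>carrier (FVB n). y \<otimes>\<^bsub>FVB n\<^esub> x = \<one>\<^bsub>FVB n\<^esub>" by blast
qed (auto simp: carrier_FVB one_FVB mult_FVB_class)

lemma inv_FVB_class:
  "u \<in> fvb_words n \<Longrightarrow> inv\<^bsub>FVB n\<^esub> (fvb_class n u) = fvb_class n (rev u)"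
  using group.inv_equality[OF group_FVB] fvb_eq_rev_cancel
  by (simp add: mult_FVB_class one_FVB carrier_FVB fvb_class_eqI)

section \<open>\<open>\<Theta>\<close> factors through \<open>xy_aut\<close>\<close>

fun xy_gen :: "ab fword \<Rightarrow> fvb_gen \<Rightarrow> xy_aut" where
  "xy_gen w (Sig i) = XYAut (transpose i (i + 1)) id
     (\<lambda>k. if k = i then w_y w i (i + 1) else if k = i + 1 then fg_inv (w_y w i (i + 1)) else [])"
| "xy_gen w (Rho i) = XYAut (transpose i (i + 1)) (transpose i (i + 1)) (\<lambda>_. [])"

fun xy_word :: "ab fword \<Rightarrow> fvb_gen list \<Rightarrow> xy_aut" where
  "xy_word w [] = xy_id"
| "xy_word w (g # u) = xy_comp (xy_gen w g) (xy_word w u)"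

lemma xy_wf_xy_gen [simp]: "xy_wf (xy_gen w g)"
  by (cases g) (auto simp: xy_wf_def)

lemma xy_wf_xy_word [simp]: "xy_wf (xy_word w u)"
  by (induction u) auto

lemma theta_gen_eq: "theta_gen w g = xy_images (xy_gen w g)"
  by (cases g; rule ext; case_tac x) (auto simp: transpose_def w_at_eq_w_y)

lemma theta_word_eq: "theta_word w u = xy_images (xy_word w u)"
proof (induction u)
  case Nil
  show ?case by (rule ext, case_tac x) (auto simp: xy_id_def)
next
  case (Cons g u)
  show ?case by (rule ext) (simp add: Cons theta_gen_eq xy_images_comp)
qed

lemma xy_word_append: "xy_word w (u @ v) = xy_comp (xy_word w u) (xy_word w v)"
  by (induction u) (auto simp: xy_comp_id_left xy_comp_assoc)

lemma xy_word_rel: "(l, r) \<in> fvb_rels n \<Longrightarrow> xy_word w l = xy_word w r"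
  unfolding fvb_rels_def
  by (auto simp: xy_comp_id_right xy_comp_def xy_id_def transpose_def fun_eq_iff)

lemma xy_word_fvb_eq: "fvb_eq n u v \<Longrightarrow> xy_word w u = xy_word w v"
  by (induction rule: fvb_eq.induct) (auto simp: xy_word_append xy_word_rel)

definition xy_of :: "ab fword \<Rightarrow> fvb_gen list set \<Rightarrow> xy_aut" where
  "xy_of w C = xy_word w (SOME u. u \<in> C)"

lemma xy_of_class: "u \<in> fvb_words n \<Longrightarrow> xy_of w (fvb_class n u) = xy_word w u"
proof -
  assume "u \<in> fvb_words n"
  then have "u \<in> fvb_class n u" by (simp add: fvb_class_def fvb_eq.refl)
  then have "(SOME v. v \<in> fvb_class n u) \<in> fvb_class n u" by (rule someI)
  then show ?thesis by (simp add: xy_of_def fvb_class_def xy_word_fvb_eq)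
qed

lemma Theta_eq_xy_images: "Theta w C = xy_images (xy_of w C)"
  by (simp add: Theta_def xy_of_def theta_word_eq)

lemma xy_of_mult:
  "C \<in> carrier (FVB n) \<Longrightarrow> D \<in> carrier (FVB n)
    \<Longrightarrow> xy_of w (C \<otimes>\<^bsub>FVB n\<^esub> D) = xy_comp (xy_of w C) (xy_of w D)"
  by (auto simp: carrier_FVB mult_FVB_class xy_of_class xy_word_append)

lemma xy_of_one: "xy_of w \<one>\<^bsub>FVB n\<^esub> = xy_id"
  by (simp add: one_FVB xy_of_class)

lemma xy_of_inv:
  assumes "C \<in> carrier (FVB n)"
  shows "xy_comp (xy_of w C) (xy_of w (inv\<^bsub>FVB n\<^esub> C)) = xy_id"
proof -
  interpret group "FVB n" by (rule group_FVB)
  show ?thesis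
    using xy_of_mult[OF assms inv_closed[OF assms], of w] assms by (simp add: xy_of_one)
qed

lemma xy_wf_xy_of [simp]: "xy_wf (xy_of w C)"
  by (simp add: xy_of_def)

definition fvb_supported :: "nat \<Rightarrow> ab fword \<Rightarrow> nat set \<Rightarrow> fvb_gen list set set" where
  "fvb_supported n w S = {C \<in> carrier (FVB n). xy_supported S (xy_of w C)}"

lemma subgroup_fvb_supported: "subgroup (fvb_supported n w S) (FVB n)"
proof (rule group.subgroupI[OF group_FVB])
  have "\<one>\<^bsub>FVB n\<^esub> \<in> fvb_supported n w S"
    using group.is_monoid[OF group_FVB]
    by (simp add: fvb_supported_def xy_of_one xy_supported_id)
  then show "fvb_supported n w S \<noteq> {}" by blast
next
  fix C assume "C \<in> fvb_supported n w S"
  then show "inv\<^bsub>FVB n\<^esub> C \<in> fvb_supported n w S"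
    using xy_supported_inverse[OF _ xy_wf_xy_of xy_of_inv] group.inv_closed[OF group_FVB]
    by (auto simp: fvb_supported_def)
next
  fix C D assume "C \<in> fvb_supported n w S" "D \<in> fvb_supported n w S"
  then show "C \<otimes>\<^bsub>FVB n\<^esub> D \<in> fvb_supported n w S"
    using group.subgroupE(4)[OF group_FVB] monoid.m_closed[OF group.is_monoid[OF group_FVB]]
    by (auto simp: fvb_supported_def xy_of_mult xy_supported_comp)
qed (auto simp: fvb_supported_def)

lemma commutator_fvb_supported:
  assumes "h \<in> fvb_supported n w S" and "k \<in> fvb_supported n w T"
  shows "h \<otimes>\<^bsub>FVB n\<^esub> k \<otimes>\<^bsub>FVB n\<^esub> inv\<^bsub>FVB n\<^esub> h \<otimes>\<^bsub>FVB n\<^esub> inv\<^bsub>FVB n\<^esub> k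
    \<in> fvb_supported n w (S \<inter> T)"
proof -
  interpret group "FVB n" by (rule group_FVB)
  have carrier: "h \<in> carrier (FVB n)" "k \<in> carrier (FVB n)"
    using assms by (simp_all add: fvb_supported_def)
  then show ?thesis
    using assms xy_supported_commutator[OF _ _ _ _ _ _ xy_of_inv xy_of_inv]
    by (simp add: fvb_supported_def xy_of_mult)
qed

lemma generate_fvb_supported:
  "H \<subseteq> fvb_supported n w S \<Longrightarrow> generate (FVB n) H \<subseteq> fvb_supported n w S"
  by (rule group.generate_subgroup_incl[OF group_FVB _ subgroup_fvb_supported])

lemma comm_sub_fvb_supported:
  assumes "H \<subseteq> fvb_supported n w S" and "K \<subseteq> fvb_supported n w T"
  shows "comm_sub (FVB n) H K \<subseteq> fvb_supported n w (S \<inter> T)"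
  unfolding comm_sub_def
  using assms commutator_fvb_supported by (intro generate_fvb_supported) blast

lemma fvb_supported_empty_subset_Theta_ker: "fvb_supported n w {} \<subseteq> Theta_ker n w"
proof
  fix C assume "C \<in> fvb_supported n w {}"
  then have "C \<in> carrier (FVB n)" and "xy_supported {} (xy_of w C)"
    by (simp_all add: fvb_supported_def)
  moreover have "Theta w C l = [(True, l)]" if "xy_supported {} (xy_of w C)" for l
    using that by (cases l) (simp_all add: Theta_eq_xy_images xy_supported_def)
  ultimately show "C \<in> Theta_ker n w" by (simp add: Theta_ker_def)
qed

section \<open>The generators of \<open>Q\<close>, \<open>M\<close> and \<open>P\<close>\<close>

lemma fvb_class_supported:
  "u \<in> fvb_words n \<Longrightarrow> xy_supported S (xy_word w u) \<Longrightarrow> fvb_class n u \<in> fvb_supported n w S"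
  by (simp add: fvb_supported_def carrier_FVB xy_of_class)

lemma xy_supportedI_window:
  assumes "x_idx t i = i \<and> y_idx t i = i \<and> (i \<notin> S \<longrightarrow> x_tail t i = [])"
    and "x_idx t (i + 1) = i + 1 \<and> y_idx t (i + 1) = i + 1
      \<and> (i + 1 \<notin> S \<longrightarrow> x_tail t (i + 1) = [])"
    and "x_idx t (i + 2) = i + 2 \<and> y_idx t (i + 2) = i + 2
      \<and> (i + 2 \<notin> S \<longrightarrow> x_tail t (i + 2) = [])"
    and "\<And>k. k \<noteq> i \<Longrightarrow> k \<noteq> i + 1 \<Longrightarrow> k \<noteq> i + 2
      \<Longrightarrow> x_idx t k = k \<and> y_idx t k = k \<and> x_tail t k = []"
  shows "xy_supported S t"
  unfolding xy_supported_def fun_eq_iff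
  using assms by (metis id_apply add_2_eq_Suc' Suc_eq_plus1)

lemma fvb_t_adjacent_supported:
  assumes "1 \<le> i" and "i < n"
  shows "fvb_t n i (i + 1) \<in> fvb_supported n w {i, i + 1}"
proof -
  have "fvb_t n i (i + 1) = fvb_class n [Rho i, Sig i, Rho i, Sig i]"
    using assms by (simp add: fvb_t_def fvb_sigma_def fvb_rho_def mult_FVB_class)
  moreover have "xy_supported {i, i + 1} (xy_word w [Rho i, Sig i, Rho i, Sig i])"
    by (rule xy_supportedI_window[where i = i]) simp_all
  ultimately show ?thesis
    using assms by (simp add: fvb_class_supported)
qed

lemma fvb_t_skip_supported:
  assumes "1 \<le> i" and "i + 1 < n"
  shows "fvb_t n i (i + 2) \<in> fvb_supported n w {i, i + 2}"
proof -
  let ?u = "[Rho (i + 1), Rho i, Sig i, Rho (i + 1)]"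
  have "fvb_t n i (i + 2) = fvb_class n (?u @ ?u)"
    using assms by (simp add: fvb_t_def fvb_sigma_def fvb_rho_def mult_FVB_class)
  moreover have "xy_supported {i, i + 2} (xy_word w (?u @ ?u))"
    by (rule xy_supportedI_window[where i = i]) simp_all
  ultimately show ?thesis
    using assms by (simp add: fvb_class_supported)
qed

lemma fvb_d_supported:
  assumes "1 \<le> i" and "i + 1 < n"
  shows "fvb_d n i (i + 1) (i + 2) \<in> fvb_supported n w {i + 1, i + 2}"
proof -
  let ?u = "rev [Rho (i + 1), Sig (i + 1)] @ rev [Rho i, Sig i]
    @ [Rho (i + 1), Sig (i + 1)] @ [Rho (i + 1), Rho i, Sig i, Rho (i + 1)]"
  have "fvb_d n i (i + 1) (i + 2) = fvb_class n ?u"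
    using assms
    by (simp add: fvb_d_def fvb_sigma_def fvb_rho_def inv_FVB_class mult_FVB_class del: rev.simps)
  moreover have "xy_supported {i + 1, i + 2} (xy_word w ?u)"
    by (rule xy_supportedI_window[where i = i]) simp_all
  ultimately show ?thesis
    using assms by (simp add: fvb_class_supported)
qed

lemma fvb_e_supported:
  assumes "1 \<le> i" and "i + 1 < n"
  shows "fvb_e n i (i + 1) (i + 2) \<in> fvb_supported n w {i, i + 1}"
proof -
  let ?u = "rev [Rho (i + 1), Sig (i + 1)] @ rev [Rho i, Sig i]
    @ [Rho (i + 1), Rho i, Sig i, Rho (i + 1)] @ [Rho i, Sig i]"
  have "fvb_e n i (i + 1) (i + 2) = fvb_class n ?u"
    using assms
    by (simp add: fvb_e_def fvb_sigma_def fvb_rho_def inv_FVB_class mult_FVB_class del: rev.simps)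
  moreover have "xy_supported {i, i + 1} (xy_word w ?u)"
    by (rule xy_supportedI_window[where i = i]) simp_all
  ultimately show ?thesis
    using assms by (simp add: fvb_class_supported)
qed

theorem lemma4p1:
  fixes n i :: nat and w :: "ab fword"
  assumes "n \<ge> 3" and "1 \<le> i" and "i \<le> n - 2"
  shows "comm_sub (FVB n)
           (generate (FVB n) {fvb_t n i (i+1), fvb_e n i (i+1) (i+2)})
           (comm_sub (FVB n)
              (generate (FVB n) {fvb_t n (i+1) (i+2), fvb_d n i (i+1) (i+2)})
              (generate (FVB n) {fvb_t n i (i+2)}))
         \<subseteq> Theta_ker n w"
proof -
  have i: "1 \<le> i" "i + 1 < n"
    using assms by simp_all
  have Q: "generate (FVB n) {fvb_t n i (i+1), fvb_e n i (i+1) (i+2)} \<subseteq> fvb_supported n w {i, i+1}"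
    using fvb_t_adjacent_supported[of i n w] fvb_e_supported[OF i, of w] i
    by (intro generate_fvb_supported) simp
  have M: "generate (FVB n) {fvb_t n (i+1) (i+2), fvb_d n i (i+1) (i+2)}
      \<subseteq> fvb_supported n w {i+1, i+2}"
    using fvb_t_adjacent_supported[of "i + 1" n w] fvb_d_supported[OF i, of w] i
    by (intro generate_fvb_supported) simp
  have P: "generate (FVB n) {fvb_t n i (i+2)} \<subseteq> fvb_supported n w {i, i+2}"
    using fvb_t_skip_supported[OF i, of w] by (intro generate_fvb_supported) simp
  have "{i, i+1} \<inter> ({i+1, i+2} \<inter> {i, i+2}) = {}"
    by auto
  then show ?thesis
    using comm_sub_fvb_supported[OF Q comm_sub_fvb_supported[OF M P]]
      fvb_supported_empty_subset_Theta_ker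
    by (metis subset_trans)
qed

end
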